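(* Let $(V,\mathcal H,\iota,W)$ be an abelian functional theory with set of weights $\Omega$. Suppose $\rho_*$ lies in the relative interior of $\mathrm{conv}(\Omega)$, and let $|\Phi\rangle$ be a minimizer of the pure-state constrained search at $\rho_*$, i.e. $\|\Phi\|=1$, $\iota^*(|\Phi\rangle\langle\Phi|)=\rho_*$, and $\langle\Psi|W|\Psi\rangle\ge\langle\Phi|W|\Phi\rangle$ for every normalized $|\Psi\rangle$ with $\iota^*(|\Psi\rangle\langle\Psi|)=\rho_*$. If $|\delta\rangle$ is a weight vector with $\langle\delta|\Phi\rangle=0$, then $\langle\delta|W|\Phi\rangle=0$.
   Context: A generalized functional theory is a tuple $(V,\mathcal H,\iota,W)$ with $V$ a finite-dimensional real vector space, $\mathcal H$ a finite-dimensional complex Hilbert space, $\iota:V\to i\mathfrak u(\mathcal H)$ linear into the Hermitian operators, $W$ Hermitian; it is abelian if all $\iota(v)$ commute. States are linear functionals via the trace and $\iota^*$ is the dual map, $\langle\iota^*(\Gamma),v\rangle=\mathrm{Tr}(\Gamma\iota(v))$. A weight is $\alpha\in V^*$ such that some nonzero $\psi$ satisfies $\iota(v)\psi=\langle\alpha,v\rangle\psi$ for all $v$; such a nonzero $\psi$ is a weight vector. $\Omega$ is the set of weights. *)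

theory Defs
  imports "HOL-Analysis.Analysis"
begin

text \<open>V is a finite-dimensional real vector space 'v::euclidean_space;
  its dual V^* is identified with 'v via the inner product (alpha pairs with v as alpha \<bullet> v).\<close>

definition adj :: "complex^'n^'n \<Rightarrow> complex^'n^'n" where
  "adj A = (\<chi> i j. cnj (A $ j $ i))"

definition hermitian :: "complex^'n^'n \<Rightarrow> bool" where
  "hermitian A \<longleftrightarrow> adj A = A"

definition braket :: "complex^'n \<Rightarrow> complex^'n \<Rightarrow> complex" where
  "braket x y = (\<Sum>i\<in>UNIV. cnj (x $ i) * y $ i)"

definition ketbra :: "complex^'n \<Rightarrow> complex^'n \<Rightarrow> complex^'n^'n" where
  "ketbra x y = (\<chi> i j. x $ i * cnj (y $ j))"

definition gft :: "('v::euclidean_space \<Rightarrow> complex^'n^'n) \<Rightarrow> complex^'n^'n \<Rightarrow> bool" where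
  "gft iota W \<longleftrightarrow> linear iota \<and> (\<forall>v. hermitian (iota v)) \<and> hermitian W"

definition abelian :: "('v::euclidean_space \<Rightarrow> complex^'n^'n) \<Rightarrow> bool" where
  "abelian iota \<longleftrightarrow> (\<forall>u v. iota u ** iota v = iota v ** iota u)"

text \<open>iota_star iota G is the element r of V (= V^*) with r \<bullet> v = Tr(G iota(v)).\<close>
definition iota_star :: "('v::euclidean_space \<Rightarrow> complex^'n^'n) \<Rightarrow> complex^'n^'n \<Rightarrow> 'v" where
  "iota_star iota G = (\<Sum>b\<in>Basis. Re (trace (G ** iota b)) *\<^sub>R b)"

definition weight_vector :: "('v::euclidean_space \<Rightarrow> complex^'n^'n) \<Rightarrow> 'v \<Rightarrow> complex^'n \<Rightarrow> bool" where
  "weight_vector iota alpha psi \<longleftrightarrow> psi \<noteq> 0 \<and>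
     (\<forall>v. iota v *v psi = complex_of_real (alpha \<bullet> v) *s psi)"

definition weights :: "('v::euclidean_space \<Rightarrow> complex^'n^'n) \<Rightarrow> 'v set" where
  "weights iota = {alpha. \<exists>psi. weight_vector iota alpha psi}"

end

theory Submission
  imports Defs
begin

text \<open>
  Suppose \<open>\<langle>\<delta>|W|\<Phi>\<rangle> \<noteq> 0\<close> with \<open>\<delta>\<close> of weight \<open>\<alpha>\<close>. Because \<open>\<rho>\<close> lies in the relative interior of
  the convex hull of the weights, it is a convex combination \<open>\<Sum> q\<^sub>\<beta> \<beta>\<close> of weights with
  \<open>q\<^sub>\<alpha> > 0\<close>. Weight vectors of distinct weights are orthogonal, so a superposition
  \<open>\<eta> = \<Sum> c\<^sub>\<beta> w\<^sub>\<beta>\<close> of normalised weight vectors with \<open>|c\<^sub>\<beta>|\<^sup>2 = q\<^sub>\<beta>\<close> is a unit vector whose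
  density is \<open>\<rho>\<close>. Choosing the phases of the \<open>c\<^sub>\<beta>\<close> suitably makes all real cross terms of
  \<open>\<eta>\<close> with \<open>\<Phi>\<close> vanish except \<open>Re \<langle>\<Phi>|W|\<eta>\<rangle>\<close>, which becomes negative. Then every
  \<open>a \<Phi> + b \<eta>\<close> with \<open>a\<^sup>2 + b\<^sup>2 = 1\<close> is a unit vector of density \<open>\<rho>\<close>, and for small \<open>b > 0\<close> its
  energy is below that of \<open>\<Phi>\<close>, contradicting minimality.
\<close>

lemma braket_add_left: "braket (x + y) z = braket x z + braket y z"
  by (simp add: braket_def distrib_right sum.distrib)

lemma braket_add_right: "braket x (y + z) = braket x y + braket x z"
  by (simp add: braket_def distrib_left sum.distrib)

lemma braket_scale_left: "braket (c *s x) y = cnj c * braket x y"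
  by (simp add: braket_def sum_distrib_left mult_ac)

lemma braket_scale_right: "braket x (c *s y) = c * braket x y"
  by (simp add: braket_def sum_distrib_left mult_ac)

lemma braket_sum_left: "braket (sum f T) y = (\<Sum>i\<in>T. braket (f i) y)"
  by (simp add: braket_def sum_distrib_right sum.swap[of _ T])

lemma braket_sum_right: "braket x (sum f T) = (\<Sum>i\<in>T. braket x (f i))"
  by (simp add: braket_def sum_distrib_left sum.swap[of _ T])

lemma cnj_braket: "cnj (braket x y) = braket y x"
  by (simp add: braket_def mult_ac)

lemma braket_self: "braket x x = complex_of_real ((norm x)\<^sup>2)"
proof -
  have "braket x x = (\<Sum>i\<in>UNIV. complex_of_real ((norm (x $ i))\<^sup>2))"
    unfolding braket_def by (intro sum.cong refl) (metis complex_norm_square of_real_power mult.commute)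
  also have "\<dots> = complex_of_real ((norm x)\<^sup>2)"
    by (simp add: norm_vec_def L2_set_def sum_nonneg)
  finally show ?thesis .
qed

lemma matrix_vector_mult_sum:
  "finite T \<Longrightarrow> (A::complex^'n^'m) *v sum f T = (\<Sum>i\<in>T. A *v f i)"
  by (induction T rule: finite_induct) (auto simp: matrix_vector_right_distrib)

lemma hermitian_braket_swap:
  assumes "hermitian A"
  shows "braket x (A *v y) = braket (A *v x) y"
proof -
  have A: "cnj (A $ j $ i) = A $ i $ j" for i j
    using assms unfolding hermitian_def adj_def by (metis vec_lambda_beta)
  have "braket x (A *v y) = (\<Sum>i\<in>UNIV. \<Sum>j\<in>UNIV. cnj (x $ i) * (A $ i $ j * y $ j))"
    by (simp add: braket_def matrix_vector_mult_def sum_distrib_left)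
  also have "\<dots> = (\<Sum>j\<in>UNIV. \<Sum>i\<in>UNIV. cnj (A $ j $ i * x $ i) * y $ j)"
    by (subst sum.swap) (simp add: A mult_ac)
  also have "\<dots> = braket (A *v x) y"
    by (simp add: braket_def matrix_vector_mult_def sum_distrib_right)
  finally show ?thesis .
qed

lemma hermitian_mat_1: "hermitian (mat 1)"
  by (simp add: hermitian_def adj_def mat_def vec_eq_iff)

lemma trace_ketbra_mult: "trace (ketbra x x ** A) = braket x (A *v x)"
proof -
  have "trace (ketbra x x ** A) = (\<Sum>i\<in>UNIV. \<Sum>k\<in>UNIV. x $ i * cnj (x $ k) * A $ k $ i)"
    by (simp add: trace_def ketbra_def matrix_matrix_mult_def)
  also have "\<dots> = (\<Sum>k\<in>UNIV. \<Sum>i\<in>UNIV. cnj (x $ k) * (A $ k $ i * x $ i))"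
    by (subst sum.swap) (simp add: mult_ac)
  also have "\<dots> = braket x (A *v x)"
    by (simp add: braket_def matrix_vector_mult_def sum_distrib_left)
  finally show ?thesis .
qed

lemma iota_star_ketbra_eq_iff:
  "iota_star iota (ketbra x x) = rho \<longleftrightarrow> (\<forall>b\<in>Basis. Re (braket x (iota b *v x)) = rho \<bullet> b)"
  by (auto simp: euclidean_eq_iff[of _ rho] iota_star_def trace_ketbra_mult inner_sum_left
      inner_Basis if_distrib cong: if_cong)

lemma Re_braket_real_combination:
  assumes "hermitian A"
  shows "Re (braket (complex_of_real a *s x + complex_of_real b *s y)
      (A *v (complex_of_real a *s x + complex_of_real b *s y)))
    = a\<^sup>2 * Re (braket x (A *v x)) + b\<^sup>2 * Re (braket y (A *v y)) + 2 * a * b * Re (braket x (A *v y))"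
proof -
  have "braket y (A *v x) = cnj (braket x (A *v y))"
    by (simp add: hermitian_braket_swap[OF assms] cnj_braket)
  then show ?thesis
    by (simp add: matrix_vector_right_distrib vector_scalar_commute braket_add_left
        braket_add_right braket_scale_left braket_scale_right power2_eq_square algebra_simps)
qed

definition orthonormal_on :: "'a set \<Rightarrow> ('a \<Rightarrow> complex^'n) \<Rightarrow> bool" where
  "orthonormal_on T w \<longleftrightarrow> (\<forall>b\<in>T. \<forall>g\<in>T. braket (w b) (w g) = (if b = g then 1 else 0))"

lemma braket_orthonormal_sum:
  assumes "finite T" "orthonormal_on T w"
  shows "braket (\<Sum>b\<in>T. c b *s w b) (\<Sum>b\<in>T. d b *s w b) = (\<Sum>b\<in>T. cnj (c b) * d b)"
proof -
  have "(\<Sum>b\<in>T. cnj (c b) * braket (w b) (w g)) = cnj (c g)" if "g \<in> T" for g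
  proof -
    have "(\<Sum>b\<in>T. cnj (c b) * braket (w b) (w g)) = (\<Sum>b\<in>T. if b = g then cnj (c b) else 0)"
      using assms(2) that unfolding orthonormal_on_def by (intro sum.cong) auto
    then show ?thesis
      using assms(1) that by simp
  qed
  then show ?thesis
    by (simp add: braket_sum_left braket_sum_right braket_scale_left braket_scale_right
        sum_distrib_left mult.commute flip: sum.swap cong: sum.cong)
qed

lemma matrix_vector_mult_eigen_sum:
  fixes A :: "complex^'n^'n"
  assumes "finite T" "\<forall>b\<in>T. A *v w b = f b *s w b"
  shows "A *v (\<Sum>b\<in>T. c b *s w b) = (\<Sum>b\<in>T. (c b * f b) *s w b)"
  using assms(2) by (simp add: matrix_vector_mult_sum[OF assms(1)] vector_scalar_commute
      vector_smult_assoc mult.commute cong: sum.cong)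

lemma weight_vector_orthogonal:
  assumes "\<forall>v. hermitian (iota v)" "weight_vector iota \<beta> x" "weight_vector iota \<gamma> y" "\<beta> \<noteq> \<gamma>"
  shows "braket x y = 0"
proof -
  define v where "v = \<gamma> - \<beta>"
  have "complex_of_real (\<gamma> \<bullet> v) * braket x y = braket x (iota v *v y)"
    using assms(3) by (simp add: weight_vector_def braket_scale_right)
  also have "\<dots> = braket (iota v *v x) y"
    using assms(1) by (simp add: hermitian_braket_swap)
  also have "\<dots> = complex_of_real (\<beta> \<bullet> v) * braket x y"
    using assms(2) by (simp add: weight_vector_def braket_scale_left)
  finally have "(\<gamma> \<bullet> v - \<beta> \<bullet> v) * braket x y = 0"
    by (simp add: algebra_simps flip: of_real_diff)
  moreover have "\<gamma> \<bullet> v - \<beta> \<bullet> v \<noteq> 0"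
    using assms(4) by (simp add: v_def flip: inner_diff_left)
  ultimately show ?thesis by simp
qed

lemma weight_vector_normalize:
  assumes "weight_vector iota \<beta> x"
  shows "weight_vector iota \<beta> (complex_of_real (1 / norm x) *s x)"
    and "norm (complex_of_real (1 / norm x) *s x) = 1"
proof -
  have "complex_of_real (1 / norm x) *s x = (1 / norm x) *\<^sub>R x"
    unfolding vector_scalar_mult_def scaleR_vec_def by (simp add: vec_eq_iff scaleR_conv_of_real)
  moreover have "x \<noteq> 0"
    using assms by (simp add: weight_vector_def)
  ultimately show "norm (complex_of_real (1 / norm x) *s x) = 1"
    by simp
  with assms show "weight_vector iota \<beta> (complex_of_real (1 / norm x) *s x)"
    by (auto simp: weight_vector_def vector_scalar_commute vector_smult_assoc mult.commute)
qed

lemma orthonormal_weight_vectors: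
  fixes \<delta> :: "complex^'n"
  assumes "\<forall>v. hermitian (iota v)" "T \<subseteq> weights iota" "weight_vector iota a \<delta>"
  obtains w where "orthonormal_on T w" "\<forall>b\<in>T. weight_vector iota b (w b) \<and> norm (w b) = 1"
    "w a = complex_of_real (1 / norm \<delta>) *s \<delta>"
proof -
  define unit_of :: "complex^'n \<Rightarrow> complex^'n" where "unit_of x = complex_of_real (1 / norm x) *s x" for x
  define w where "w b = unit_of (if b = a then \<delta> else SOME x. weight_vector iota b x)" for b
  have w: "\<forall>b\<in>T. weight_vector iota b (w b) \<and> norm (w b) = 1"
  proof
    fix b assume "b \<in> T"
    then have "weight_vector iota b (if b = a then \<delta> else SOME x. weight_vector iota b x)"
      using assms(2,3) someI_ex[of "weight_vector iota b"] by (auto simp: weights_def)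
    from weight_vector_normalize[OF this] show "weight_vector iota b (w b) \<and> norm (w b) = 1"
      by (simp only: w_def unit_of_def)
  qed
  then have "orthonormal_on T w"
    unfolding orthonormal_on_def using weight_vector_orthogonal[OF assms(1)]
    by (metis braket_self of_real_1 power_one)
  moreover have "w a = complex_of_real (1 / norm \<delta>) *s \<delta>"
    by (simp add: w_def unit_of_def)
  ultimately show ?thesis
    using that w by blast
qed

lemma exists_unit_Re_mult_eq_0: "\<exists>c. cmod c = 1 \<and> Re (c * z) = 0"
proof (cases "z = 0")
  case False
  have "\<i> * cnj z / complex_of_real (cmod z) * z = \<i> * complex_of_real (cmod z)"
    using False by (simp add: field_simps complex_norm_square[symmetric] power2_eq_square)
  with False show ?thesis
    by (intro exI[of _ "\<i> * cnj z / complex_of_real (cmod z)"]) (simp add: norm_divide norm_mult)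
qed (auto intro: exI[of _ 1])

lemma exists_norm_Re_mult_eq_0_nonpos:
  assumes "r \<ge> 0"
  shows "\<exists>c. cmod c = r \<and> Re (c * z) = 0 \<and> Re (c * y) \<le> 0"
proof -
  obtain u where u: "cmod u = 1" "Re (u * z) = 0"
    using exists_unit_Re_mult_eq_0 by blast
  show ?thesis
  proof (cases "Re (u * y) \<le> 0")
    case True
    with u assms show ?thesis
      by (intro exI[of _ "complex_of_real r * u"]) (simp add: norm_mult mult.assoc mult_nonneg_nonpos)
  next
    case False
    with u assms show ?thesis
      by (intro exI[of _ "- complex_of_real r * u"]) (simp add: norm_mult mult.assoc)
  qed
qed

lemma exists_norm_Re_mult_neg:
  assumes "r > 0" "y \<noteq> 0"
  shows "\<exists>c. cmod c = r \<and> Re (c * y) < 0"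
proof -
  define c where "c = - complex_of_real r * cnj y / complex_of_real (cmod y)"
  have "c * y = - complex_of_real (r * cmod y)"
    using assms(2) by (simp add: c_def field_simps complex_norm_square[symmetric] power2_eq_square)
  with assms show ?thesis
    by (intro exI[of _ c]) (simp add: c_def norm_divide norm_mult)
qed

lemma exists_phased_amplitudes:
  fixes z y :: "'a \<Rightarrow> complex"
  assumes "\<forall>b\<in>T. 0 \<le> q b" "a \<in> T" "q a > 0" "z a = 0" "y a \<noteq> 0"
  obtains c where "\<forall>b\<in>T. cmod (c b) = sqrt (q b) \<and> Re (c b * z b) = 0 \<and> Re (c b * y b) \<le> 0"
    "Re (c a * y a) < 0"
proof -
  have "\<exists>c. cmod c = sqrt (q b) \<and> Re (c * z b) = 0 \<and> Re (c * y b) \<le> 0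
      \<and> (b = a \<longrightarrow> Re (c * y b) < 0)" if "b \<in> T" for b
  proof (cases "b = a")
    case True
    then show ?thesis
      using assms(3-5) exists_norm_Re_mult_neg[of "sqrt (q a)" "y a"] by (auto simp: less_imp_le)
  next
    case False
    then show ?thesis
      using that assms(1) exists_norm_Re_mult_eq_0_nonpos[of "sqrt (q b)"] by simp
  qed
  then obtain c where "\<forall>b\<in>T. cmod (c b) = sqrt (q b) \<and> Re (c b * z b) = 0 \<and> Re (c b * y b) \<le> 0
      \<and> (b = a \<longrightarrow> Re (c b * y b) < 0)"
    by metis
  with assms(2) that show ?thesis
    by blast
qed

lemma rel_interior_convex_hull_positive_combination:
  fixes rho :: "'a::euclidean_space"
  assumes "rho \<in> rel_interior (convex hull A)" "a \<in> A"
  obtains T q where "finite T" "T \<subseteq> A" "a \<in> T" "\<forall>b\<in>T. 0 \<le> q b" "q a > 0" "sum q T = 1"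
    "(\<Sum>b\<in>T. q b *\<^sub>R b) = rho"
proof -
  obtain e where e: "e > 1" "(1 - e) *\<^sub>R a + e *\<^sub>R rho \<in> convex hull A"
    using assms convex_rel_interior_iff[OF convex_convex_hull, of A] by (metis empty_iff hull_inc)
  then obtain S u where S: "finite S" "S \<subseteq> A" "\<forall>x\<in>S. 0 \<le> u x" "sum u S = 1"
    and u: "(\<Sum>x\<in>S. u x *\<^sub>R x) = (1 - e) *\<^sub>R a + e *\<^sub>R rho"
    unfolding convex_hull_explicit by blast
  define T where "T = insert a S"
  \<comment> \<open>\<open>rho = (1/e) p + (1 - 1/e) a\<close> with \<open>p = \<Sum>x\<in>S. u x *\<^sub>R x\<close> in the hull\<close>
  define q where "q b = (if b \<in> S then u b / e else 0) + (if b = a then 1 - 1 / e else 0)" for b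
  have T: "finite T" "a \<in> T"
    using S by (simp_all add: T_def)
  have restrict: "(\<Sum>b\<in>T. if b \<in> S then f b else 0) = sum f S" for f :: "'a \<Rightarrow> 'c::comm_monoid_add"
    by (metis T_def T(1) Int_absorb1 subset_insertI sum.inter_restrict)
  have "sum q T = sum u S / e + (1 - 1 / e)"
    using T restrict[of "\<lambda>b. u b / e"] by (simp add: q_def sum.distrib sum_divide_distrib)
  moreover have "(\<Sum>b\<in>T. q b *\<^sub>R b) = (1 / e) *\<^sub>R (\<Sum>x\<in>S. u x *\<^sub>R x) + (1 - 1 / e) *\<^sub>R a"
    using T restrict[of "\<lambda>b. (u b / e) *\<^sub>R b"]
    by (simp add: q_def scaleR_add_left sum.distrib if_distrib[of "\<lambda>t. t *\<^sub>R _"] scaleR_sum_right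
        cong: if_cong)
  moreover have "0 < 1 - 1 / e"
    using e(1) by simp
  then have "\<forall>b\<in>T. 0 \<le> q b" "q a > 0"
    using S(3) e(1) by (auto simp: q_def T_def intro!: add_nonneg_pos)
  ultimately show ?thesis
    using that[of T q] T S(1,2) assms(2) e(1) by (simp add: T_def S(4) u algebra_simps)
qed

lemma exists_circle_point_below:
  fixes E F C :: real
  assumes "C < 0"
  shows "\<exists>a b. a\<^sup>2 + b\<^sup>2 = 1 \<and> a\<^sup>2 * E + b\<^sup>2 * F + 2 * a * b * C < E"
proof -
  define D where "D = \<bar>F - E\<bar>"
  define b where "b = min (1 / 2) (- C / (2 * (D + 1)))"
  define a where "a = sqrt (1 - b\<^sup>2)"
  have D: "D \<ge> 0"
    by (simp add: D_def)
  have "- C / (2 * (D + 1)) > 0"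
    using assms D by (intro divide_pos_pos) simp_all
  then have b: "0 < b" "b \<le> 1 / 2"
    unfolding b_def by (simp_all only: min_less_iff_conj min.cobounded1) simp
  have bD: "b * D \<le> - C / 2"
  proof -
    have "b * D \<le> - C / (2 * (D + 1)) * D"
      using D by (intro mult_right_mono) (simp_all add: b_def)
    also have "\<dots> \<le> - C / 2"
      using D assms by (simp add: field_simps)
    finally show ?thesis .
  qed
  have "b\<^sup>2 \<le> 1 / 4"
    using power_mono[OF b(2), of 2] b(1) by (simp add: power2_eq_square)
  then have a2: "a\<^sup>2 = 1 - b\<^sup>2" and a: "a \<ge> 1 / 2"
    unfolding a_def by (simp, intro real_le_rsqrt) (simp add: power2_eq_square)
  have "b\<^sup>2 * (F - E) \<le> b * (b * D)"
    using b(1) by (simp add: D_def power2_eq_square)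
  also have "\<dots> \<le> b * (- C / 2)"
    using bD b(1) by (intro mult_left_mono) simp_all
  finally have "b\<^sup>2 * (F - E) \<le> b * (- C / 2)" .
  moreover have "(2 * a) * (b * C) \<le> 1 * (b * C)"
    using a b(1) assms by (intro mult_right_mono_neg) (simp_all add: mult_pos_neg less_imp_le)
  ultimately have "a\<^sup>2 * E + b\<^sup>2 * F + 2 * a * b * C \<le> E + b * C / 2"
    by (simp add: a2 algebra_simps)
  also have "\<dots> < E"
    using b(1) assms by (simp add: mult_pos_neg)
  finally show ?thesis
    using a2 by (intro exI[of _ a] exI[of _ b]) simp
qed

lemma weight_superposition:
  fixes iota :: "'v::euclidean_space \<Rightarrow> complex^'n^'n" and c :: "'v \<Rightarrow> complex"
  assumes "finite T" "orthonormal_on T w" "\<forall>b\<in>T. weight_vector iota b (w b)"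
  defines "\<eta> \<equiv> \<Sum>b\<in>T. c b *s w b"
  shows "braket \<eta> \<eta> = (\<Sum>b\<in>T. complex_of_real ((cmod (c b))\<^sup>2))"
    and "braket \<eta> (iota v *v \<eta>) = (\<Sum>b\<in>T. complex_of_real ((cmod (c b))\<^sup>2 * (b \<bullet> v)))"
    and "braket x (iota v *v \<eta>) = (\<Sum>b\<in>T. c b * complex_of_real (b \<bullet> v) * braket x (w b))"
proof -
  have iota_\<eta>: "iota v *v \<eta> = (\<Sum>b\<in>T. (c b * complex_of_real (b \<bullet> v)) *s w b)"
    unfolding \<eta>_def using assms(1,3) by (intro matrix_vector_mult_eigen_sum) (auto simp: weight_vector_def)
  have norm_sq: "cnj (c b) * c b = complex_of_real ((cmod (c b))\<^sup>2)" for b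
    by (metis complex_norm_square mult.commute of_real_power)
  show "braket \<eta> \<eta> = (\<Sum>b\<in>T. complex_of_real ((cmod (c b))\<^sup>2))"
    using braket_orthonormal_sum[OF assms(1,2), of c c] by (simp add: \<eta>_def norm_sq)
  have "braket \<eta> (iota v *v \<eta>) = (\<Sum>b\<in>T. cnj (c b) * (c b * complex_of_real (b \<bullet> v)))"
    unfolding iota_\<eta> unfolding \<eta>_def by (rule braket_orthonormal_sum[OF assms(1,2)])
  then show "braket \<eta> (iota v *v \<eta>) = (\<Sum>b\<in>T. complex_of_real ((cmod (c b))\<^sup>2 * (b \<bullet> v)))"
    by (simp add: norm_sq flip: mult.assoc)
  show "braket x (iota v *v \<eta>) = (\<Sum>b\<in>T. c b * complex_of_real (b \<bullet> v) * braket x (w b))"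
    by (simp add: iota_\<eta> braket_sum_right braket_scale_right)
qed

lemma phased_weight_superposition:
  fixes iota :: "'v::euclidean_space \<Rightarrow> complex^'n^'n" and c :: "'v \<Rightarrow> complex"
  assumes T: "finite T" "a \<in> T"
    and w: "orthonormal_on T w" "\<forall>b\<in>T. weight_vector iota b (w b)"
    and q: "\<forall>b\<in>T. 0 \<le> q b" "sum q T = 1" "(\<Sum>b\<in>T. q b *\<^sub>R b) = rho"
    and c: "\<forall>b\<in>T. cmod (c b) = sqrt (q b) \<and> Re (c b * braket \<Phi> (w b)) = 0
      \<and> Re (c b * braket \<Phi> (W *v w b)) \<le> 0" "Re (c a * braket \<Phi> (W *v w a)) < 0"
  defines "\<eta> \<equiv> \<Sum>b\<in>T. c b *s w b"
  shows "norm \<eta> = 1" "Re (braket \<Phi> \<eta>) = 0" "Re (braket \<eta> (iota v *v \<eta>)) = rho \<bullet> v"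
    "Re (braket \<Phi> (iota v *v \<eta>)) = 0" "Re (braket \<Phi> (W *v \<eta>)) < 0"
proof -
  have cq: "(cmod (c b))\<^sup>2 = q b" if "b \<in> T" for b
    using c(1) q(1) that by simp
  note \<eta> = weight_superposition[OF T(1) w, where c = c, folded \<eta>_def]
  have "complex_of_real ((norm \<eta>)\<^sup>2) = complex_of_real (sum q T)"
    using \<eta>(1) cq by (simp add: braket_self)
  then have "(norm \<eta>)\<^sup>2 = 1"
    using q(2) by (simp only: of_real_eq_iff)
  then show "norm \<eta> = 1"
    using norm_ge_zero[of \<eta>] by (auto simp: power2_eq_1_iff)
  show "Re (braket \<Phi> \<eta>) = 0"
    using c(1) by (simp add: \<eta>_def braket_sum_right braket_scale_right)
  show "Re (braket \<eta> (iota v *v \<eta>)) = rho \<bullet> v"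
    using \<eta>(2) cq by (simp add: inner_sum_left flip: q(3))
  have "Re (braket \<Phi> (iota v *v \<eta>)) = (\<Sum>b\<in>T. (b \<bullet> v) * Re (c b * braket \<Phi> (w b)))"
    unfolding \<eta>(3) Re_sum by (intro sum.cong refl) (simp add: algebra_simps)
  also have "\<dots> = 0"
    using c(1) by simp
  finally show "Re (braket \<Phi> (iota v *v \<eta>)) = 0" .
  have "Re (braket \<Phi> (W *v \<eta>)) = (\<Sum>b\<in>T. Re (c b * braket \<Phi> (W *v w b)))"
    by (simp add: \<eta>_def matrix_vector_mult_sum[OF T(1)] vector_scalar_commute braket_sum_right
        braket_scale_right)
  also have "\<dots> = Re (c a * braket \<Phi> (W *v w a)) + (\<Sum>b\<in>T - {a}. Re (c b * braket \<Phi> (W *v w b)))"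
    by (rule sum.remove[OF T])
  also have "\<dots> < 0"
    using c by (intro add_neg_nonpos sum_nonpos) auto
  finally show "Re (braket \<Phi> (W *v \<eta>)) < 0" .
qed

lemma exists_energy_lowering_direction:
  fixes iota :: "'v::euclidean_space \<Rightarrow> complex^'n^'n"
  assumes herm: "\<forall>v. hermitian (iota v)"
    and rho: "rho \<in> rel_interior (convex hull (weights iota))"
    and \<delta>: "weight_vector iota a \<delta>" "braket \<delta> \<Phi> = 0" "braket \<Phi> (W *v \<delta>) \<noteq> 0"
  obtains \<eta> where "norm \<eta> = 1" "Re (braket \<Phi> \<eta>) = 0"
    "\<And>v. Re (braket \<eta> (iota v *v \<eta>)) = rho \<bullet> v" "\<And>v. Re (braket \<Phi> (iota v *v \<eta>)) = 0"
    "Re (braket \<Phi> (W *v \<eta>)) < 0"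
proof -
  have "a \<in> weights iota"
    using \<delta>(1) by (auto simp: weights_def)
  then obtain T q where T: "finite T" "T \<subseteq> weights iota" "a \<in> T"
    and q: "\<forall>b\<in>T. 0 \<le> q b" "q a > 0" "sum q T = 1" "(\<Sum>b\<in>T. q b *\<^sub>R b) = rho"
    using rel_interior_convex_hull_positive_combination[OF rho] by blast
  obtain w where w: "orthonormal_on T w" "\<forall>b\<in>T. weight_vector iota b (w b) \<and> norm (w b) = 1"
    "w a = complex_of_real (1 / norm \<delta>) *s \<delta>"
    using orthonormal_weight_vectors[OF herm T(2) \<delta>(1)] by blast
  have "\<delta> \<noteq> 0"
    using \<delta>(1) by (simp add: weight_vector_def)
  then have "braket \<Phi> (W *v w a) \<noteq> 0"
    using \<delta>(3) by (simp add: w(3) vector_scalar_commute braket_scale_right)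
  moreover have "braket \<Phi> (w a) = 0"
    using \<delta>(2) cnj_braket[of \<delta> \<Phi>] by (simp add: w(3) braket_scale_right)
  ultimately obtain c where c: "\<forall>b\<in>T. cmod (c b) = sqrt (q b) \<and> Re (c b * braket \<Phi> (w b)) = 0
      \<and> Re (c b * braket \<Phi> (W *v w b)) \<le> 0" "Re (c a * braket \<Phi> (W *v w a)) < 0"
    using exists_phased_amplitudes[of T q a "\<lambda>b. braket \<Phi> (w b)" "\<lambda>b. braket \<Phi> (W *v w b)"]
      q(1,2) T(3) by blast
  have "\<forall>b\<in>T. weight_vector iota b (w b)"
    using w(2) by blast
  from phased_weight_superposition[OF T(1,3) w(1) this q(1,3,4) c] show ?thesis
    by (rule that)
qed

lemma exists_lower_energy_state:
  fixes iota :: "'v::euclidean_space \<Rightarrow> complex^'n^'n"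
  assumes herm: "hermitian W" "\<forall>v. hermitian (iota v)"
    and \<Phi>: "norm \<Phi> = 1" "iota_star iota (ketbra \<Phi> \<Phi>) = rho"
    and \<eta>: "norm \<eta> = 1" "Re (braket \<Phi> \<eta>) = 0" "\<And>v. Re (braket \<eta> (iota v *v \<eta>)) = rho \<bullet> v"
      "\<And>v. Re (braket \<Phi> (iota v *v \<eta>)) = 0" "Re (braket \<Phi> (W *v \<eta>)) < 0"
  obtains \<Psi> where "norm \<Psi> = 1" "iota_star iota (ketbra \<Psi> \<Psi>) = rho"
    "Re (braket \<Psi> (W *v \<Psi>)) < Re (braket \<Phi> (W *v \<Phi>))"
proof -
  obtain a b where ab: "a\<^sup>2 + b\<^sup>2 = 1" and energy:
    "a\<^sup>2 * Re (braket \<Phi> (W *v \<Phi>)) + b\<^sup>2 * Re (braket \<eta> (W *v \<eta>))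
       + 2 * a * b * Re (braket \<Phi> (W *v \<eta>)) < Re (braket \<Phi> (W *v \<Phi>))"
    using exists_circle_point_below[OF \<eta>(5)] by blast
  define \<Psi> where "\<Psi> = complex_of_real a *s \<Phi> + complex_of_real b *s \<eta>"
  have "(norm \<Psi>)\<^sup>2 = Re (braket \<Psi> (mat 1 *v \<Psi>))"
    by (simp add: braket_self)
  also have "\<dots> = 1"
    unfolding \<Psi>_def Re_braket_real_combination[OF hermitian_mat_1]
    using \<Phi>(1) \<eta>(1,2) ab by (simp add: braket_self)
  finally have "norm \<Psi> = 1"
    using norm_ge_zero[of \<Psi>] by (auto simp: power2_eq_1_iff)
  moreover have "iota_star iota (ketbra \<Psi> \<Psi>) = rho"
    unfolding iota_star_ketbra_eq_iff
  proof
    fix v :: 'v assume "v \<in> Basis"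
    then have "Re (braket \<Phi> (iota v *v \<Phi>)) = rho \<bullet> v"
      using \<Phi>(2) iota_star_ketbra_eq_iff by blast
    then show "Re (braket \<Psi> (iota v *v \<Psi>)) = rho \<bullet> v"
      unfolding \<Psi>_def Re_braket_real_combination[OF herm(2)[rule_format]]
      using \<eta>(3,4) ab by (simp flip: distrib_right)
  qed
  moreover have "Re (braket \<Psi> (W *v \<Psi>)) < Re (braket \<Phi> (W *v \<Phi>))"
    unfolding \<Psi>_def Re_braket_real_combination[OF herm(1)] using energy .
  ultimately show ?thesis
    using that by blast
qed

theorem lemma4p22:
  fixes iota :: "'v::euclidean_space \<Rightarrow> complex^'n^'n"
    and W :: "complex^'n^'n" and rho :: 'v and Phi delta :: "complex^'n"
  assumes "gft iota W"
    and "abelian iota"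
    and "rho \<in> rel_interior (convex hull (weights iota))"
    and "norm Phi = 1"
    and "iota_star iota (ketbra Phi Phi) = rho"
    and "\<And>Psi. norm Psi = 1 \<Longrightarrow> iota_star iota (ketbra Psi Psi) = rho \<Longrightarrow>
           Re (braket Psi (W *v Psi)) \<ge> Re (braket Phi (W *v Phi))"
    and "\<exists>alpha. weight_vector iota alpha delta"
    and "braket delta Phi = 0"
  shows "braket delta (W *v Phi) = 0"
proof (rule ccontr)
  assume "braket delta (W *v Phi) \<noteq> 0"
  have herm: "hermitian W" "\<forall>v. hermitian (iota v)"
    using assms(1) by (simp_all add: gft_def)
  obtain alpha where alpha: "weight_vector iota alpha delta"
    using assms(7) by blast
  have "braket Phi (W *v delta) \<noteq> 0"
    using \<open>braket delta (W *v Phi) \<noteq> 0\<close> herm(1)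
    by (metis cnj_braket complex_cnj_zero hermitian_braket_swap)
  then obtain \<eta> where "norm \<eta> = 1" "Re (braket Phi \<eta>) = 0"
    "\<And>v. Re (braket \<eta> (iota v *v \<eta>)) = rho \<bullet> v" "\<And>v. Re (braket Phi (iota v *v \<eta>)) = 0"
    "Re (braket Phi (W *v \<eta>)) < 0"
    using exists_energy_lowering_direction[OF herm(2) assms(3) alpha assms(8)] by blast
  then obtain Psi where "norm Psi = 1" "iota_star iota (ketbra Psi Psi) = rho"
    "Re (braket Psi (W *v Psi)) < Re (braket Phi (W *v Phi))"
    using exists_lower_energy_state[OF herm assms(4,5)] by blast
  with assms(6) show False
    by fastforce
qed

end
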